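(* Let $H$ be the three-dimensional Heisenberg group with the left-invariant metric $g$ (parameter $A>0$) and magnetic form $\Omega$ (parameter $B$) of the context, let $\Gamma_1,\Gamma_2<H$ be cocompact lattices, and suppose that for some $E>|B|$ the manifolds $\Gamma_1\backslash H$ and $\Gamma_2\backslash H$ have the same marked magnetic length spectrum at energy $E$. Let $\exp(\bar z_1Z)$ and $\exp(\bar z_2Z)$ be generators of the central lattices $\Gamma_1\cap Z(H)$ and $\Gamma_2\cap Z(H)$ respectively. Then $|\bar z_1|=|\bar z_2|$.
   Context: $H$ is the simply connected Lie group whose Lie algebra has basis $X,Y,Z$ with only nonzero bracket $[X,Y]=Z$; its center is $Z(H)=\exp(\mathbb RZ)$, and for a cocompact lattice $\Gamma$, $\Gamma\cap Z(H)$ is infinite cyclic. $g$ is the left-invariant metric with $\{X/\sqrt A,Y/\sqrt A,Z\}$ orthonormal; with $\{\alpha,\beta,\zeta\}$ the dual basis, $\Omega=d(B\zeta)=-B\alpha\wedge\beta$. Magnetic geodesics are curves with $\nabla_{\sigma'}\sigma'=F\sigma'$, $g(Fu,v)=\Omega(u,v)$, of constant speed $E$ (energy). $\Gamma_i\backslash H$ carries the induced metric and magnetic form; free homotopy classes of closed curves correspond to conjugacy classes of $\Gamma_i\cong\pi_1(\Gamma_i\backslash H)$ and an isomorphism $\phi:\Gamma_1\to\Gamma_2$ induces a bijection $\phi_*$ of free homotopy classes. $L(\mathcal C;E)$ is the set of lengths of smoothly closed magnetic geodesics of energy $E$ in the class $\mathcal C$ (length of one of period $\omega$ is $E|\omega|$).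 Same marked magnetic length spectrum at energy $E$ means there is an isomorphism $\phi:\Gamma_1\to\Gamma_2$ with $L(\phi_*\mathcal C;E)=L(\mathcal C;E)$ for every nontrivial free homotopy class $\mathcal C$. *)

theory Defs
  imports "HOL-Analysis.Analysis"
begin

text \<open>The Heisenberg group H in exponential coordinates:
  the point (a,b,c) is exp(aX + bY + cZ), with [X,Y] = Z.\<close>

type_synonym heis = "real^3"

definition hexp :: "real \<Rightarrow> real \<Rightarrow> real \<Rightarrow> heis" where
  "hexp a b c = (\<chi> i. if i = 1 then a else if i = 2 then b else c)"

text \<open>Group law (Baker-Campbell-Hausdorff), identity 0, inverse -p.\<close>
definition hmul :: "heis \<Rightarrow> heis \<Rightarrow> heis" where
  "hmul p q = hexp (p$1 + q$1) (p$2 + q$2) (p$3 + q$3 + (p$1 * q$2 - q$1 * p$2) / 2)"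

definition hinv :: "heis \<Rightarrow> heis" where
  "hinv p = - p"

definition hcenter :: "heis set" where
  "hcenter = {c. \<forall>h. hmul c h = hmul h c}"

text \<open>Cocompact lattice: discrete subgroup with compact quotient
  (equivalently some compact K with Gamma K = H).\<close>
definition heis_lattice :: "heis set \<Rightarrow> bool" where
  "heis_lattice G \<longleftrightarrow> 0 \<in> G \<and> (\<forall>a\<in>G. \<forall>b\<in>G. hmul a b \<in> G) \<and> (\<forall>a\<in>G. hinv a \<in> G)
     \<and> (\<exists>e>0. \<forall>g\<in>G. norm g < e \<longrightarrow> g = 0)
     \<and> (\<exists>K. compact K \<and> (\<Union>g\<in>G. hmul g ` K) = UNIV)"

text \<open>Coframe (alpha, beta, zeta) dual to the left-invariant frame (X, Y, Z), where in
  coordinates X = d_x - (y/2) d_z, Y = d_y + (x/2) d_z, Z = d_z.\<close>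
definition h_alpha :: "heis \<Rightarrow> heis \<Rightarrow> real" where "h_alpha p u = u$1"
definition h_beta :: "heis \<Rightarrow> heis \<Rightarrow> real" where "h_beta p u = u$2"
definition h_zeta :: "heis \<Rightarrow> heis \<Rightarrow> real" where
  "h_zeta p u = u$3 + (p$2 / 2) * u$1 - (p$1 / 2) * u$2"

definition hg :: "real \<Rightarrow> heis \<Rightarrow> heis \<Rightarrow> heis \<Rightarrow> real" where
  "hg A p u v = A * h_alpha p u * h_alpha p v + A * h_beta p u * h_beta p v
                + h_zeta p u * h_zeta p v"

text \<open>Magnetic form Omega = d(B zeta) = - B alpha /\ beta.\<close>
definition hOmega :: "real \<Rightarrow> heis \<Rightarrow> heis \<Rightarrow> heis \<Rightarrow> real" where
  "hOmega B p u v = - B * (h_alpha p u * h_beta p v - h_alpha p v * h_beta p u)"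

definition gc :: "real \<Rightarrow> heis \<Rightarrow> 3 \<Rightarrow> 3 \<Rightarrow> real" where
  "gc A p i j = hg A p (axis i 1) (axis j 1)"

definition dgc :: "real \<Rightarrow> heis \<Rightarrow> 3 \<Rightarrow> 3 \<Rightarrow> 3 \<Rightarrow> real" where
  "dgc A p k i j = deriv (\<lambda>s. gc A (p + s *\<^sub>R axis k 1) i j) 0"

definition christoffel1 :: "real \<Rightarrow> heis \<Rightarrow> 3 \<Rightarrow> 3 \<Rightarrow> 3 \<Rightarrow> real" where
  "christoffel1 A p l i j = (dgc A p i j l + dgc A p j i l - dgc A p l i j) / 2"

text \<open>Magnetic geodesic of energy E: nabla_{s'} s' = F s' with g(Fu,v) = Omega(u,v),
  i.e. g(nabla_{s'} s', e_l) = Omega(s', e_l) for every coordinate vector e_l,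
  and constant speed E.\<close>
definition mag_geodesic :: "real \<Rightarrow> real \<Rightarrow> real \<Rightarrow> (real \<Rightarrow> heis) \<Rightarrow> bool" where
  "mag_geodesic A B E s \<longleftrightarrow> (\<exists>s' s''. \<forall>t.
      (s has_vector_derivative s' t) (at t) \<and>
      (s' has_vector_derivative s'' t) (at t) \<and>
      sqrt (hg A (s t) (s' t) (s' t)) = E \<and>
      (\<forall>l. (\<Sum>k\<in>UNIV. gc A (s t) l k * s'' t $ k)
           + (\<Sum>i\<in>UNIV. \<Sum>j\<in>UNIV. christoffel1 A (s t) l i j * s' t $ i * s' t $ j)
         = hOmega B (s t) (s' t) (axis l 1)))"

text \<open>Conjugacy class of g in G (= free homotopy class of closed curves in G\H).\<close>
definition conj_class :: "heis set \<Rightarrow> heis \<Rightarrow> heis set" where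
  "conj_class G g = {hmul (hmul d g) (hinv d) | d. d \<in> G}"

text \<open>L(C;E): lengths E*omega of closed magnetic geodesics of energy E (period omega > 0)
  in G\H whose lift satisfies s(t+omega) = d s(t) with deck transformation d in C.\<close>
definition mag_lengths :: "real \<Rightarrow> real \<Rightarrow> real \<Rightarrow> heis set \<Rightarrow> real set" where
  "mag_lengths A B E C = {E * w | w. w > 0 \<and>
      (\<exists>s d. d \<in> C \<and> mag_geodesic A B E s \<and> (\<forall>t. s (t + w) = hmul d (s t)))}"

definition heis_group_iso :: "heis set \<Rightarrow> heis set \<Rightarrow> (heis \<Rightarrow> heis) \<Rightarrow> bool" where
  "heis_group_iso G1 G2 f \<longleftrightarrow> bij_betw f G1 G2 \<and>
      (\<forall>a\<in>G1. \<forall>b\<in>G1. f (hmul a b) = hmul (f a) (f b))"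

definition same_marked_mag_spectrum ::
  "real \<Rightarrow> real \<Rightarrow> real \<Rightarrow> heis set \<Rightarrow> heis set \<Rightarrow> bool" where
  "same_marked_mag_spectrum A B E G1 G2 \<longleftrightarrow> (\<exists>f. heis_group_iso G1 G2 f \<and>
      (\<forall>g\<in>G1. g \<noteq> 0 \<longrightarrow>
         mag_lengths A B E (conj_class G2 (f g)) = mag_lengths A B E (conj_class G1 g)))"

end

theory Submission
  imports Defs
begin

text \<open>Along a magnetic geodesic the \<open>\<zeta>\<close>-component c of the velocity is conserved, and the
  planar part of the velocity rotates with frequency (B - c)/A. A closed geodesic whose deck
  transformation is the central element exp(zZ) is therefore either a vertical line of length
  |z|, or a helix making N \<ge> 1 full turns, whose length and vertical drift z are explicit in c
  and N. Above the threshold |z| > 2\<pi>AE/(E - |B|) the shortest of these lengths is that of a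
  one-turn helix, with square 4E^2\<pi>A(|z| - \<pi>A)/(E^2 - B^2), a strictly increasing function
  of |z|. An element commuting with a cocompact lattice is central, so an isomorphism of
  lattices maps the central lattice onto the central lattice and exp(kz1Z) to exp(\<plusminus>kz2Z).
  Comparing the shortest lengths in these classes for large k gives |z1| = |z2|.\<close>

lemma abs_less_iff_power2_less:
  fixes x y :: real
  shows "0 \<le> y \<Longrightarrow> \<bar>x\<bar> < y \<longleftrightarrow> x^2 < y^2"
  by (metis abs_le_square_iff abs_of_nonneg not_le)

lemma has_vector_derivative_vec_nth:
  "(s has_vector_derivative v) F \<Longrightarrow> ((\<lambda>t. s t $ i) has_real_derivative v $ i) F"
  unfolding has_real_derivative_iff_has_vector_derivative
  by (rule bounded_linear.has_vector_derivative[OF bounded_linear_vec_nth])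

lemma periodic_derivative:
  assumes "\<And>t. f (t + W) = f t" and "\<And>t. (f has_real_derivative f' t) (at t)"
  shows "f' (t + W) = f' t"
proof -
  have "((\<lambda>t. f (t + W)) has_real_derivative f' (t + W)) (at t)"
    using assms(2)[of "t + W"] by (simp add: DERIV_shift)
  then have "(f has_real_derivative f' (t + W)) (at t)"
    using assms(1) by simp
  then show ?thesis
    using assms(2) by (rule DERIV_unique)
qed

lemma periodic_const_derivative_eq_0:
  fixes f :: "real \<Rightarrow> real"
  assumes "W \<noteq> 0" and "f W = f 0" and "\<And>t. (f has_real_derivative a) (at t)"
  shows "a = 0"
  using DERIV_const_ratio_const[of 0 W f a] assms by simp

lemma rotation_ode_solution:
  fixes u v :: "real \<Rightarrow> real"
  assumes du: "\<And>t. (u has_real_derivative \<omega> * v t) (at t)"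
    and dv: "\<And>t. (v has_real_derivative - \<omega> * u t) (at t)"
  shows "u t = u 0 * cos (\<omega> * t) + v 0 * sin (\<omega> * t)"
    and "v t = v 0 * cos (\<omega> * t) - u 0 * sin (\<omega> * t)"
proof -
  define u\<^sub>0 where "u\<^sub>0 t = u 0 * cos (\<omega> * t) + v 0 * sin (\<omega> * t)" for t
  define v\<^sub>0 where "v\<^sub>0 t = v 0 * cos (\<omega> * t) - u 0 * sin (\<omega> * t)" for t
  define e where "e t = (u t - u\<^sub>0 t)^2 + (v t - v\<^sub>0 t)^2" for t
  have "(e has_real_derivative
      2 * (u t - u\<^sub>0 t) * (\<omega> * v t - \<omega> * v\<^sub>0 t) + 2 * (v t - v\<^sub>0 t) * (- \<omega> * u t + \<omega> * u\<^sub>0 t)) (at t)"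
    for t
    unfolding e_def u\<^sub>0_def v\<^sub>0_def
    by (auto intro!: derivative_eq_intros du dv simp: algebra_simps)
  then have "(e has_real_derivative 0) (at t)" for t
    by (simp add: algebra_simps)
  then have "e t = e 0"
    by (rule DERIV_isconst_all[rule_format])
  then have "e t = 0"
    by (simp add: e_def u\<^sub>0_def v\<^sub>0_def)
  then show "u t = u\<^sub>0 t" "v t = v\<^sub>0 t"
    by (simp_all add: e_def sum_power2_eq_zero_iff)
qed

lemma rotation_ode_period:
  fixes u v :: "real \<Rightarrow> real"
  assumes "\<And>t. (u has_real_derivative \<omega> * v t) (at t)"
    and "\<And>t. (v has_real_derivative - \<omega> * u t) (at t)"
    and "u W = u 0" "v W = v 0" and "u 0 \<noteq> 0 \<or> v 0 \<noteq> 0"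
  obtains m :: int where "\<omega> * W = of_int m * 2 * pi"
proof -
  have "u 0 = u 0 * cos (\<omega> * W) + v 0 * sin (\<omega> * W)" "v 0 = v 0 * cos (\<omega> * W) - u 0 * sin (\<omega> * W)"
    using rotation_ode_solution[OF assms(1,2), of W] assms(3,4) by simp_all
  then have "((u 0)^2 + (v 0)^2) * (1 - cos (\<omega> * W)) = 0"
    by algebra
  with assms(5) have "cos (\<omega> * W) = 1"
    by (auto simp add: sum_power2_eq_zero_iff)
  with that show ?thesis
    using cos_one_2pi_int by blast
qed

lemma guiding_center_drift:
  fixes x y z u v :: "real \<Rightarrow> real"
  assumes "\<omega> \<noteq> 0"
    and dx: "\<And>t. (x has_real_derivative u t) (at t)" and dy: "\<And>t. (y has_real_derivative v t) (at t)"
    and du: "\<And>t. (u has_real_derivative \<omega> * v t) (at t)"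
    and dv: "\<And>t. (v has_real_derivative - \<omega> * u t) (at t)"
    and dz: "\<And>t. (z has_real_derivative c - (y t * u t - x t * v t) / 2) (at t)"
    and speed: "\<And>t. (u t)^2 + (v t)^2 = S"
    and x_periodic: "x W = x 0" and y_periodic: "y W = y 0"
  shows "z W - z 0 = W * (c - S / (2 * \<omega>))"
proof -
  have "((\<lambda>t. x t + v t / \<omega>) has_real_derivative 0) (at t)"
    "((\<lambda>t. y t - u t / \<omega>) has_real_derivative 0) (at t)" for t
    using \<open>\<omega> \<noteq> 0\<close> by (auto intro!: derivative_eq_intros dx dy du dv)
  then have "x t + v t / \<omega> = x 0 + v 0 / \<omega>" "y t - u t / \<omega> = y 0 - u 0 / \<omega>" for t
    by (auto intro: DERIV_isconst_all[rule_format])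
  then obtain X Y where x: "\<And>t. x t = X - v t / \<omega>" and y: "\<And>t. y t = Y + u t / \<omega>"
    by (metis add_diff_cancel_right' diff_add_cancel)
  \<comment> \<open>(X, Y) is the guiding centre of the circular motion of (x, y)\<close>
  define F where "F t = z t - c * t - (X * y t - Y * x t) / 2 + S * t / (2 * \<omega>)" for t
  have "(F has_real_derivative
      c - (y t * u t - x t * v t) / 2 - c - (X * v t - Y * u t) / 2 + S / (2 * \<omega>)) (at t)" for t
    unfolding F_def using \<open>\<omega> \<noteq> 0\<close> by (auto intro!: derivative_eq_intros dx dy dz)
  moreover have "c - (y t * u t - x t * v t) / 2 - c - (X * v t - Y * u t) / 2 + S / (2 * \<omega>) = 0" for t
    using \<open>\<omega> \<noteq> 0\<close> by (simp add: x y speed[of t, symmetric] field_simps power2_eq_square)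
  ultimately have "F W = F 0"
    by (intro DERIV_isconst_all[rule_format]) simp
  with x_periodic y_periodic have "z W - c * W + S * W / (2 * \<omega>) = z 0"
    by (simp add: F_def)
  then show ?thesis
    by (simp add: algebra_simps)
qed

lemma periodic_gyration_period:
  fixes x y u v :: "real \<Rightarrow> real"
  assumes "W \<noteq> 0"
    and dx: "\<And>t. (x has_real_derivative u t) (at t)" and dy: "\<And>t. (y has_real_derivative v t) (at t)"
    and du: "\<And>t. (u has_real_derivative \<omega> * v t) (at t)"
    and dv: "\<And>t. (v has_real_derivative - \<omega> * u t) (at t)"
    and x_periodic: "\<And>t. x (t + W) = x t" and y_periodic: "\<And>t. y (t + W) = y t"
    and moving: "u 0 \<noteq> 0 \<or> v 0 \<noteq> 0"
  obtains m :: int where "\<omega> \<noteq> 0" "\<omega> * W = of_int m * 2 * pi"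
proof -
  have "\<omega> \<noteq> 0"
  proof
    assume "\<omega> = 0"
    then have "u t = u 0" "v t = v 0" for t
      using du dv by (auto intro: DERIV_isconst_all[rule_format])
    then have "(x has_real_derivative u 0) (at t)" "(y has_real_derivative v 0) (at t)" for t
      using dx dy by metis+
    then have "u 0 = 0" "v 0 = 0"
      using periodic_const_derivative_eq_0[OF \<open>W \<noteq> 0\<close>] x_periodic[of 0] y_periodic[of 0] by auto
    with moving show False
      by simp
  qed
  moreover have "u W = u 0" "v W = v 0"
    using periodic_derivative[OF x_periodic dx, of 0] periodic_derivative[OF y_periodic dy, of 0] by simp_all
  ultimately show thesis
    using rotation_ode_period[OF du dv _ _ moving] that by blast
qed

lemma hexp_nth [simp]: "hexp a b c $ 1 = a" "hexp a b c $ 2 = b" "hexp a b c $ 3 = c"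
  by (simp_all add: hexp_def)

lemma hmul_nth [simp]:
  "hmul p q $ 1 = p$1 + q$1" "hmul p q $ 2 = p$2 + q$2"
  "hmul p q $ 3 = p$3 + q$3 + (p$1 * q$2 - q$1 * p$2) / 2"
  by (simp_all add: hmul_def)

lemma heis_eq_iff: "(p::heis) = q \<longleftrightarrow> p$1 = q$1 \<and> p$2 = q$2 \<and> p$3 = q$3"
  by (simp only: vec_eq_iff forall_3)

lemma hexp_zero [simp]: "hexp 0 0 0 = 0"
  by (simp add: heis_eq_iff)

lemma hmul_zero [simp]: "hmul 0 0 = 0"
  by (simp add: heis_eq_iff)

lemma hexp_eq_hexp_iff [simp]: "hexp a b c = hexp a' b' c' \<longleftrightarrow> a = a' \<and> b = b' \<and> c = c'"
  by (simp add: heis_eq_iff)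

lemma hexp_eq_0_iff [simp]: "hexp a b c = 0 \<longleftrightarrow> a = 0 \<and> b = 0 \<and> c = 0"
  by (simp add: heis_eq_iff)

lemma hexp_as_axis: "hexp a b c = a *\<^sub>R axis 1 1 + b *\<^sub>R axis 2 1 + c *\<^sub>R axis 3 1"
  by (simp add: heis_eq_iff axis_def)

lemma hcenter_iff: "c \<in> hcenter \<longleftrightarrow> c$1 = 0 \<and> c$2 = 0"
proof
  assume "c \<in> hcenter"
  then have "hmul c h = hmul h c" for h
    unfolding hcenter_def by blast
  from this[of "hexp 1 0 0"] this[of "hexp 0 1 0"] show "c$1 = 0 \<and> c$2 = 0"
    by (simp_all add: heis_eq_iff)
qed (simp add: hcenter_def heis_eq_iff)

lemma hexp_vertical_in_hcenter: "hexp 0 0 w \<in> hcenter"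
  by (simp add: hcenter_iff)

lemma hmul_hexp_vertical: "hmul p (hexp 0 0 w) = hexp (p$1) (p$2) (p$3 + w)"
  by (simp add: heis_eq_iff)

lemma conj_class_central: "0 \<in> G \<Longrightarrow> c \<in> hcenter \<Longrightarrow> conj_class G c = {c}"
  unfolding conj_class_def hinv_def by (auto simp: hcenter_iff heis_eq_iff algebra_simps)

section \<open>The magnetic geodesic equation in coordinates\<close>

text \<open>The lowered covariant acceleration g(\<nabla>_v v, e_l) at p of a curve with velocity v and
  coordinate acceleration a.\<close>
definition cov_accel :: "real \<Rightarrow> heis \<Rightarrow> heis \<Rightarrow> heis \<Rightarrow> 3 \<Rightarrow> real" where
  "cov_accel A p v a l =
     (\<Sum>k\<in>UNIV. gc A p l k * a $ k) + (\<Sum>i\<in>UNIV. \<Sum>j\<in>UNIV. christoffel1 A p l i j * v $ i * v $ j)"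

lemma mag_geodesic_iff_cov_accel:
  "mag_geodesic A B E s \<longleftrightarrow> (\<exists>s' s''. \<forall>t.
      (s has_vector_derivative s' t) (at t) \<and>
      (s' has_vector_derivative s'' t) (at t) \<and>
      sqrt (hg A (s t) (s' t) (s' t)) = E \<and>
      (\<forall>l. cov_accel A (s t) (s' t) (s'' t) l = hOmega B (s t) (s' t) (axis l 1)))"
  unfolding mag_geodesic_def cov_accel_def ..

lemma h_zeta_translate: "h_zeta (p + s *\<^sub>R v) u = h_zeta p u + s * (v$2 * u$1 - v$1 * u$2) / 2"
  by (simp add: h_zeta_def field_simps)

lemma dgc_eq:
  fixes k i j :: 3
  defines "e \<equiv> \<lambda>i::3. axis i (1::real)"
  shows "dgc A p k i j =
    ((e k $ 2 * e i $ 1 - e k $ 1 * e i $ 2) * h_zeta p (e j)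
     + h_zeta p (e i) * (e k $ 2 * e j $ 1 - e k $ 1 * e j $ 2)) / 2"
proof -
  have "((\<lambda>s. gc A (p + s *\<^sub>R e k) i j) has_field_derivative
     ((e k $ 2 * e i $ 1 - e k $ 1 * e i $ 2) * h_zeta p (e j)
     + h_zeta p (e i) * (e k $ 2 * e j $ 1 - e k $ 1 * e j $ 2)) / 2) (at 0)"
    unfolding gc_def hg_def h_zeta_translate e_def
    by (auto intro!: derivative_eq_intros simp: h_alpha_def h_beta_def field_simps)
  then show ?thesis
    unfolding dgc_def e_def by (rule DERIV_imp_deriv)
qed

lemma cov_accel_eq:
  "cov_accel A p v a 1 = A * a$1 + p$2 / 2 * h_zeta p a + h_zeta p v * v$2"
  "cov_accel A p v a 2 = A * a$2 - p$1 / 2 * h_zeta p a - h_zeta p v * v$1"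
  "cov_accel A p v a 3 = h_zeta p a"
  unfolding cov_accel_def christoffel1_def dgc_eq sum_3 gc_def hg_def
  by (simp_all add: h_alpha_def h_beta_def h_zeta_def axis_def algebra_simps field_simps)

lemma hOmega_axis:
  "hOmega B p v (axis 1 1) = B * v$2" "hOmega B p v (axis 2 1) = - B * v$1"
  "hOmega B p v (axis 3 1) = 0"
  by (simp_all add: hOmega_def h_alpha_def h_beta_def axis_def)

lemma hg_diag: "hg A p v v = A * ((v$1)^2 + (v$2)^2) + (h_zeta p v)^2"
  by (simp add: hg_def h_alpha_def h_beta_def power2_eq_square algebra_simps)

lemma mag_geodesic_coordinates:
  assumes "A > 0" and "mag_geodesic A B E s"
  obtains s' a where "\<And>t. (s has_vector_derivative s' t) (at t)"
    "\<And>t. (s' has_vector_derivative a t) (at t)"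
    "\<And>t. A * ((s' t $ 1)^2 + (s' t $ 2)^2) + (h_zeta (s t) (s' t))^2 = E^2"
    "\<And>t. A * a t $ 1 + h_zeta (s t) (s' t) * s' t $ 2 = B * s' t $ 2"
    "\<And>t. A * a t $ 2 - h_zeta (s t) (s' t) * s' t $ 1 = - B * s' t $ 1"
    "\<And>t. h_zeta (s t) (a t) = 0"
proof -
  obtain s' a where ds: "\<And>t. (s has_vector_derivative s' t) (at t)"
    and ds': "\<And>t. (s' has_vector_derivative a t) (at t)"
    and speed: "\<And>t. sqrt (hg A (s t) (s' t) (s' t)) = E"
    and eq: "\<And>t l. cov_accel A (s t) (s' t) (a t) l = hOmega B (s t) (s' t) (axis l 1)"
    using \<open>mag_geodesic A B E s\<close> unfolding mag_geodesic_iff_cov_accel by metis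
  have "hg A (s t) (s' t) (s' t) \<ge> 0" for t
    using \<open>A > 0\<close> by (simp add: hg_diag)
  then have "hg A (s t) (s' t) (s' t) = E^2" for t
    using speed[of t] real_sqrt_pow2 by metis
  with that[OF ds ds'] show thesis
    using eq[of _ 1] eq[of _ 2] eq[of _ 3] by (simp add: hg_diag cov_accel_eq hOmega_axis)
qed

lemma mag_geodesic_reduced:
  assumes "A > 0" and "mag_geodesic A B E s"
  obtains u v c where
    "\<And>t. ((\<lambda>t. s t $ 1) has_real_derivative u t) (at t)"
    "\<And>t. ((\<lambda>t. s t $ 2) has_real_derivative v t) (at t)"
    "\<And>t. ((\<lambda>t. s t $ 3) has_real_derivative c - (s t $ 2 * u t - s t $ 1 * v t) / 2) (at t)"
    "\<And>t. (u has_real_derivative (B - c) / A * v t) (at t)"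
    "\<And>t. (v has_real_derivative - ((B - c) / A) * u t) (at t)"
    "\<And>t. A * ((u t)^2 + (v t)^2) + c^2 = E^2"
proof -
  obtain s' a where ds: "\<And>t. (s has_vector_derivative s' t) (at t)"
    and ds': "\<And>t. (s' has_vector_derivative a t) (at t)"
    and speed: "\<And>t. A * ((s' t $ 1)^2 + (s' t $ 2)^2) + (h_zeta (s t) (s' t))^2 = E^2"
    and eq1: "\<And>t. A * a t $ 1 + h_zeta (s t) (s' t) * s' t $ 2 = B * s' t $ 2"
    and eq2: "\<And>t. A * a t $ 2 - h_zeta (s t) (s' t) * s' t $ 1 = - B * s' t $ 1"
    and eq3: "\<And>t. h_zeta (s t) (a t) = 0"
    using mag_geodesic_coordinates[OF assms] by blast
  note comp = has_vector_derivative_vec_nth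
  have "((\<lambda>t. h_zeta (s t) (s' t)) has_real_derivative h_zeta (s t) (a t)) (at t)" for t
    unfolding h_zeta_def
    by (auto intro!: derivative_eq_intros comp[OF ds] comp[OF ds'] simp: field_simps)
  then have "h_zeta (s t) (s' t) = h_zeta (s 0) (s' 0)" for t
    by (intro DERIV_isconst_all[rule_format]) (simp add: eq3)
  then obtain c where zeta: "\<And>t. h_zeta (s t) (s' t) = c"
    by blast
  show ?thesis
  proof
    show "((\<lambda>t. s t $ 1) has_real_derivative s' t $ 1) (at t)"
      "((\<lambda>t. s t $ 2) has_real_derivative s' t $ 2) (at t)" for t
      using comp[OF ds] by auto
    have "s' t $ 3 = c - (s t $ 2 * s' t $ 1 - s t $ 1 * s' t $ 2) / 2" for t
      using zeta[of t] by (simp add: h_zeta_def field_simps)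
    then show "((\<lambda>t. s t $ 3) has_real_derivative c - (s t $ 2 * s' t $ 1 - s t $ 1 * s' t $ 2) / 2) (at t)"
      for t
      using comp[OF ds, of 3 t] by simp
    have "a t $ 1 = (B - c) / A * s' t $ 2" "a t $ 2 = - ((B - c) / A) * s' t $ 1" for t
      using eq1[of t] eq2[of t] \<open>A > 0\<close> by (simp_all add: zeta field_simps)
    then show "((\<lambda>t. s' t $ 1) has_real_derivative (B - c) / A * s' t $ 2) (at t)"
      "((\<lambda>t. s' t $ 2) has_real_derivative - ((B - c) / A) * s' t $ 1) (at t)" for t
      using comp[OF ds', of 1 t] comp[OF ds', of 2 t] by simp_all
    show "A * ((s' t $ 1)^2 + (s' t $ 2)^2) + c^2 = E^2" for t
      using speed[of t] by (simp add: zeta)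
  qed
qed

section \<open>Closed magnetic geodesics in a central class\<close>

definition helix :: "real \<Rightarrow> real \<Rightarrow> real \<Rightarrow> real \<Rightarrow> heis" where
  "helix R w k t = hexp (R * sin (w * t)) (R * cos (w * t)) (k * t)"

lemma helix_mag_geodesic:
  assumes "E \<ge> 0" and speed: "A * (R * w)^2 + (k + R^2 * w / 2)^2 = E^2"
    and gyration: "A * w = B - (k + R^2 * w / 2)"
  shows "mag_geodesic A B E (helix R w k)"
proof -
  define v where "v t = hexp (R * w * cos (w * t)) (- R * w * sin (w * t)) k" for t
  define a where "a t = hexp (- R * w^2 * sin (w * t)) (- R * w^2 * cos (w * t)) 0" for t
  have dv: "(helix R w k has_vector_derivative v t) (at t)" for t
    unfolding helix_def v_def hexp_as_axis by (auto intro!: derivative_eq_intros simp: mult_ac)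
  have da: "(v has_vector_derivative a t) (at t)" for t
    unfolding a_def v_def hexp_as_axis by (auto intro!: derivative_eq_intros simp: power2_eq_square mult_ac)
  have zeta_v: "h_zeta (helix R w k t) (v t) = k + R^2 * w / 2" for t
  proof -
    have "(sin (w * t))^2 + (cos (w * t))^2 = 1" by simp
    then show ?thesis unfolding h_zeta_def helix_def v_def hexp_nth by algebra
  qed
  have zeta_a: "h_zeta (helix R w k t) (a t) = 0" for t
    by (simp add: h_zeta_def helix_def a_def power2_eq_square algebra_simps)
  have "hg A (helix R w k t) (v t) (v t) = A * (R * w)^2 + (k + R^2 * w / 2)^2" for t
  proof -
    have "(sin (w * t))^2 + (cos (w * t))^2 = 1" by simp
    then show ?thesis unfolding hg_diag zeta_v unfolding v_def hexp_nth by algebra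
  qed
  then have "sqrt (hg A (helix R w k t) (v t) (v t)) = E" for t
    using speed \<open>E \<ge> 0\<close> by simp
  moreover have "\<forall>l. cov_accel A (helix R w k t) (v t) (a t) l = hOmega B (helix R w k t) (v t) (axis l 1)"
    for t
  proof -
    have "B = A * w + (k + R^2 * w / 2)"
      using gyration by simp
    then show ?thesis
      unfolding forall_3 by (simp add: cov_accel_eq hOmega_axis zeta_v zeta_a)
        (simp add: a_def v_def power2_eq_square algebra_simps)
  qed
  ultimately show ?thesis
    unfolding mag_geodesic_iff_cov_accel using dv da by blast
qed

lemma helix_quasi_periodic:
  assumes "w * W = of_int m * 2 * pi"
  shows "helix R w k (t + W) = hmul (hexp 0 0 (k * W)) (helix R w k t)"
proof -
  have "sin (of_int m * 2 * pi) = 0" "cos (of_int m * 2 * pi) = 1"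
    using sin_int_2pin[of m] cos_int_2pin[of m] by (simp_all add: mult_ac)
  then have "sin (w * (t + W)) = sin (w * t)" "cos (w * (t + W)) = cos (w * t)"
    unfolding distrib_left assms sin_add cos_add by simp_all
  then show ?thesis
    by (simp add: helix_def heis_eq_iff algebra_simps)
qed

lemma helix_length_in_mag_lengths:
  assumes "E \<ge> 0" "A * (R * w)^2 + (k + R^2 * w / 2)^2 = E^2" "A * w = B - (k + R^2 * w / 2)"
    and "W > 0" "w * W = of_int m * 2 * pi"
  shows "E * W \<in> mag_lengths A B E {hexp 0 0 (k * W)}"
  unfolding mag_lengths_def
  using helix_mag_geodesic[OF assms(1-3)] helix_quasi_periodic[OF assms(5)] \<open>W > 0\<close> by blast

lemma vertical_drift_eq:
  fixes B c E W :: real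
  assumes "c \<noteq> B"
  shows "W * (c - (E^2 - c^2) / (2 * (B - c))) = - W * ((B - c)^2 + E^2 - B^2) / (2 * (B - c))"
  using assms by (simp add: field_simps power2_eq_square)

lemma closed_central_mag_geodesic_drift:
  assumes "A > 0" "E \<ge> 0" and "mag_geodesic A B E s" and "W > 0"
    and deck: "\<And>t. s (t + W) = hmul (hexp 0 0 z) (s t)"
  obtains c where "\<bar>c\<bar> = E" "z = W * c"
  | c m where "\<bar>c\<bar> < E" "c \<noteq> B" "(B - c) * W = 2 * pi * A * of_int m"
      "z = - W * ((B - c)^2 + E^2 - B^2) / (2 * (B - c))"
proof -
  obtain u v c where dx: "\<And>t. ((\<lambda>t. s t $ 1) has_real_derivative u t) (at t)"
    and dy: "\<And>t. ((\<lambda>t. s t $ 2) has_real_derivative v t) (at t)"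
    and dz: "\<And>t. ((\<lambda>t. s t $ 3) has_real_derivative c - (s t $ 2 * u t - s t $ 1 * v t) / 2) (at t)"
    and du: "\<And>t. (u has_real_derivative (B - c) / A * v t) (at t)"
    and dv: "\<And>t. (v has_real_derivative - ((B - c) / A) * u t) (at t)"
    and speed: "\<And>t. A * ((u t)^2 + (v t)^2) + c^2 = E^2"
    using mag_geodesic_reduced[OF assms(1,3)] by blast
  define S where "S = (E^2 - c^2) / A"
  have speed': "(u t)^2 + (v t)^2 = S" for t
    using speed[of t] \<open>A > 0\<close> by (simp add: S_def field_simps)
  have periodic: "s (t + W) $ 1 = s t $ 1" "s (t + W) $ 2 = s t $ 2" "s (t + W) $ 3 = s t $ 3 + z" for t
    by (simp_all add: deck)
  show thesis
  proof (cases "u 0 = 0 \<and> v 0 = 0")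
    case True
    then have "S = 0"
      using speed'[of 0] by simp
    then have "u t = 0 \<and> v t = 0" for t
      using speed'[of t] by (simp add: sum_power2_eq_zero_iff)
    then have "s W $ 3 - s 0 $ 3 = (W - 0) * c"
      using dz \<open>W > 0\<close> by (intro DERIV_const_ratio_const) auto
    moreover have "\<bar>c\<bar>^2 = E^2"
      using \<open>S = 0\<close> \<open>A > 0\<close> by (simp add: S_def)
    then have "\<bar>c\<bar> = E"
      using \<open>E \<ge> 0\<close> power2_eq_iff_nonneg[of "\<bar>c\<bar>" E] by simp
    ultimately show thesis
      using that(1) periodic(3)[of 0] by simp
  next
    case False
    then obtain m :: int where "(B - c) / A \<noteq> 0" and m: "(B - c) / A * W = of_int m * 2 * pi"
      using periodic_gyration_period[of W, OF _ dx dy du dv periodic(1,2)] \<open>W > 0\<close> by auto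
    then have "c \<noteq> B" and period: "(B - c) * W = 2 * pi * A * of_int m"
      using \<open>A > 0\<close> by (auto simp: field_simps)
    have "S > 0"
      using False speed'[of 0] sum_power2_gt_zero_iff by metis
    then have "\<bar>c\<bar>^2 < E^2"
      using \<open>A > 0\<close> by (simp add: S_def zero_less_divide_iff)
    then have "\<bar>c\<bar> < E"
      using \<open>E \<ge> 0\<close> power2_less_imp_less by blast
    have "s W $ 3 - s 0 $ 3 = W * (c - S / (2 * ((B - c) / A)))"
      using guiding_center_drift[where W = W, OF \<open>(B - c) / A \<noteq> 0\<close> dx dy du dv dz speed']
        periodic(1,2)[of 0] by simp
    moreover have "S / (2 * ((B - c) / A)) = (E^2 - c^2) / (2 * (B - c))"
      using \<open>A > 0\<close> by (simp add: S_def)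
    ultimately have "z = W * (c - (E^2 - c^2) / (2 * (B - c)))"
      using periodic(3)[of 0] by simp
    then have drift: "z = - W * ((B - c)^2 + E^2 - B^2) / (2 * (B - c))"
      unfolding vertical_drift_eq[OF \<open>c \<noteq> B\<close>] .
    show thesis
      by (rule that(2)[OF \<open>\<bar>c\<bar> < E\<close> \<open>c \<noteq> B\<close> period drift])
  qed
qed

lemma gyrating_helix_length:
  assumes "A > 0" "\<bar>c\<bar> < E" "c \<noteq> B" "W > 0" and period: "(B - c) * W = 2 * pi * A * of_int m"
  shows "E * W \<in> mag_lengths A B E {hexp 0 0 (- W * ((B - c)^2 + E^2 - B^2) / (2 * (B - c)))}"
proof -
  define \<omega> S where "\<omega> = (B - c) / A" and "S = (E^2 - c^2) / A"
  define R where "R = sqrt S / \<bar>\<omega>\<bar>"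
  define k where "k = c - R^2 * \<omega> / 2"
  have "\<omega> \<noteq> 0"
    using \<open>A > 0\<close> \<open>c \<noteq> B\<close> by (simp add: \<omega>_def)
  have "S > 0"
  proof -
    have "c^2 < E^2"
      using power_strict_mono[OF \<open>\<bar>c\<bar> < E\<close> abs_ge_zero, of 2] by simp
    then show ?thesis
      using \<open>A > 0\<close> by (simp add: S_def)
  qed
  have R\<omega>: "R^2 * \<omega>^2 = S"
    using \<open>S > 0\<close> \<open>\<omega> \<noteq> 0\<close> by (simp add: R_def power_divide)
  have "A * (R * \<omega>)^2 + (k + R^2 * \<omega> / 2)^2 = E^2"
    using R\<omega> \<open>A > 0\<close> by (simp add: k_def S_def power_mult_distrib)
  moreover have "A * \<omega> = B - (k + R^2 * \<omega> / 2)"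
    using \<open>A > 0\<close> by (simp add: k_def \<omega>_def)
  moreover have "\<omega> * W = of_int m * 2 * pi"
    using period \<open>A > 0\<close> by (simp add: \<omega>_def field_simps)
  moreover have kW: "k * W = - W * ((B - c)^2 + E^2 - B^2) / (2 * (B - c))"
  proof -
    have "R^2 * \<omega> / 2 = S / (2 * \<omega>)"
      using R\<omega> \<open>\<omega> \<noteq> 0\<close> by (simp add: field_simps power2_eq_square)
    also have "\<dots> = (E^2 - c^2) / (2 * (B - c))"
      using \<open>A > 0\<close> by (simp add: S_def \<omega>_def)
    finally have "k = c - (E^2 - c^2) / (2 * (B - c))"
      by (metis k_def)
    then show ?thesis
      using vertical_drift_eq[OF \<open>c \<noteq> B\<close>, of W E] by (simp add: mult.commute)
  qed
  ultimately have "E * W \<in> mag_lengths A B E {hexp 0 0 (k * W)}"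
    using helix_length_in_mag_lengths[of E A R \<omega> k B W m] \<open>\<bar>c\<bar> < E\<close> \<open>W > 0\<close> by simp
  then show ?thesis
    unfolding kW .
qed

lemma one_turn_helix_length:
  assumes "A > 0" "0 < d" "d < E - \<bar>B\<bar>" and \<sigma>: "\<sigma> = 1 \<or> \<sigma> = -1"
  shows "2 * pi * A * E / d \<in> mag_lengths A B E {hexp 0 0 (\<sigma> * pi * A * (d^2 + E^2 - B^2) / d^2)}"
proof -
  define c where "c = B + \<sigma> * d"
  have "\<bar>c\<bar> \<le> \<bar>B\<bar> + \<bar>\<sigma> * d\<bar>"
    unfolding c_def by (rule abs_triangle_ineq)
  then have "\<bar>c\<bar> < E"
    using \<sigma> \<open>d > 0\<close> \<open>d < E - \<bar>B\<bar>\<close> by auto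
  have "c \<noteq> B"
    using \<sigma> \<open>d > 0\<close> by (auto simp: c_def)
  have "2 * pi * A / d > 0"
    using \<open>A > 0\<close> \<open>d > 0\<close> by simp
  moreover have "(B - c) * (2 * pi * A / d) = 2 * pi * A * of_int (if \<sigma> = 1 then -1 else 1 :: int)"
    using \<sigma> \<open>d > 0\<close> by (auto simp: c_def)
  ultimately have "E * (2 * pi * A / d) \<in> mag_lengths A B E
      {hexp 0 0 (- (2 * pi * A / d) * ((B - c)^2 + E^2 - B^2) / (2 * (B - c)))}"
    using gyrating_helix_length[OF \<open>A > 0\<close> \<open>\<bar>c\<bar> < E\<close> \<open>c \<noteq> B\<close>] by blast
  moreover have "- (2 * pi * A / d) * ((B - c)^2 + E^2 - B^2) / (2 * (B - c))
      = \<sigma> * pi * A * (d^2 + E^2 - B^2) / d^2"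
    using \<sigma> \<open>d > 0\<close> by (elim disjE) (simp_all add: c_def field_simps power2_eq_square)
  ultimately show ?thesis
    by (simp add: mult_ac)
qed

section \<open>The shortest length in a central class\<close>

lemma vertical_length_bound:
  fixes A B E a :: real
  assumes "A > 0" "E > \<bar>B\<bar>" and a: "2 * pi * A * E / (E - \<bar>B\<bar>) \<le> a"
  shows "4 * E^2 * (pi * A) * (a - pi * A) / (E^2 - B^2) \<le> a^2"
proof -
  define u b where "u = pi * A" and "b = \<bar>B\<bar>"
  have "E - b > 0" "E + b > 0" "u > 0"
    using assms by (auto simp: u_def b_def)
  have K: "E^2 - B^2 = (E - b) * (E + b)"
    by (simp add: b_def power2_eq_square algebra_simps)
  have "2 * u * E \<le> (E - b) * a"
    using a \<open>E - b > 0\<close> by (simp add: u_def b_def field_simps)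
  moreover have "(E - b) * a \<le> (E + b) * a"
  proof -
    have "0 < (E - b) * a"
      using \<open>2 * u * E \<le> (E - b) * a\<close> \<open>u > 0\<close> \<open>E + b > 0\<close> \<open>E - b > 0\<close>
      by (smt (verit) mult_pos_pos)
    then have "a > 0"
      using \<open>E - b > 0\<close> by (simp add: zero_less_mult_iff)
    then show ?thesis
      by (simp add: b_def)
  qed
  \<comment> \<open>the difference of the two sides is a quadratic in a with roots 2uE/(E \<plusminus> b)\<close>
  ultimately have "0 \<le> ((E - b) * a - 2 * u * E) * ((E + b) * a - 2 * u * E)"
    by simp
  also have "\<dots> = (E^2 - B^2) * a^2 - 4 * E^2 * u * (a - u)"
    unfolding K by (simp add: power2_eq_square algebra_simps)
  finally have "4 * E^2 * u * (a - u) \<le> a^2 * (E^2 - B^2)"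
    by (simp add: mult.commute)
  moreover have "E^2 - B^2 > 0"
    unfolding K using \<open>E - b > 0\<close> \<open>E + b > 0\<close> by simp
  ultimately show ?thesis
    unfolding u_def by (simp add: pos_divide_le_eq)
qed

lemma helix_winding_inequality:
  fixes u b E n d a :: real
  assumes "u > 0" "0 \<le> b" "b < E" "n \<ge> 1" "0 < d" "d < E + b"
    and a_d: "a * d^2 = u * n * (d^2 + (E^2 - b^2))"
    and big: "2 * u * E \<le> a * (E - b)"
  shows "0 \<le> (n - 1) * (n * (E^2 - b^2) - d^2)"
proof (rule ccontr)
  assume "\<not> ?thesis"
  then have "(n - 1) * (n * (E^2 - b^2) - d^2) < 0"
    by simp
  then have "n > 1" "n * (E^2 - b^2) < d^2"
    using \<open>n \<ge> 1\<close> by (auto simp: mult_less_0_iff)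
  then have "u * (n * (E^2 - b^2)) < u * d^2"
    using \<open>u > 0\<close> by simp
  then have "a * d^2 < u * (n + 1) * d^2"
    unfolding a_d by (simp add: algebra_simps)
  then have "a < u * (n + 1)"
    using \<open>d > 0\<close> by simp
  have "d^2 < (E + b)^2"
    using \<open>0 < d\<close> \<open>d < E + b\<close> by (simp add: power_strict_mono)
  with \<open>n * (E^2 - b^2) < d^2\<close> have "n * (E - b) * (E + b) < (E + b) * (E + b)"
    by (simp add: power2_eq_square algebra_simps)
  then have "n * (E - b) < E + b"
    using \<open>0 \<le> b\<close> \<open>b < E\<close> by simp
  have "a * (E - b) < u * (n + 1) * (E - b)"
    using \<open>a < u * (n + 1)\<close> \<open>b < E\<close> by simp
  also have "\<dots> = u * (n * (E - b)) + u * (E - b)"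
    by (simp add: algebra_simps)
  also have "\<dots> < u * (E + b) + u * (E - b)"
    using \<open>n * (E - b) < E + b\<close> \<open>u > 0\<close> by simp
  also have "\<dots> = 2 * u * E"
    by (simp add: algebra_simps)
  finally show False
    using big by simp
qed

lemma gyrating_length_bound:
  fixes A B E W d a n :: real
  assumes "A > 0" "E > \<bar>B\<bar>" and "n \<ge> 1" and "0 < d" "d < E + \<bar>B\<bar>"
    and Wd: "W * d = 2 * pi * A * n" and a: "a = W * (d^2 + E^2 - B^2) / (2 * d)"
    and big: "2 * pi * A * E / (E - \<bar>B\<bar>) \<le> a"
  shows "4 * E^2 * (pi * A) * (a - pi * A) / (E^2 - B^2) \<le> (E * W)^2"
proof -
  define u K where "u = pi * A" and "K = E^2 - B^2"
  have "u > 0" "K > 0"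
    using assms power_strict_mono[OF \<open>E > \<bar>B\<bar>\<close> abs_ge_zero, of 2] by (auto simp: u_def K_def)
  have Wd': "W * d = 2 * u * n"
    using Wd by (simp add: u_def)
  have W: "W = 2 * u * n / d"
    using Wd' \<open>d > 0\<close> by (simp add: field_simps)
  have a_d: "a * d^2 = u * n * (d^2 + K)"
    using a \<open>d > 0\<close> unfolding W by (simp add: K_def field_simps power2_eq_square)
  have "0 \<le> (n - 1) * (n * K - d^2)"
    using helix_winding_inequality[of u "\<bar>B\<bar>" E n d a] a_d big assms(2-5) \<open>u > 0\<close>
    by (simp add: u_def K_def field_simps)
  then have "(a - u) * d^2 \<le> u * n^2 * K"
    using a_d \<open>u > 0\<close> mult_nonneg_nonneg[of u "(n - 1) * (n * K - d^2)"]
    by (simp add: power2_eq_square algebra_simps)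
  then have "4 * E^2 * u * ((a - u) * d^2) \<le> 4 * E^2 * u * (u * n^2 * K)"
    using \<open>u > 0\<close> by (intro mult_left_mono) auto
  also have "\<dots> = (E * W)^2 * K * d^2"
    using Wd' by (simp add: power2_eq_square algebra_simps)
  finally have "(4 * E^2 * u * (a - u)) * d^2 \<le> ((E * W)^2 * K) * d^2"
    by (simp add: mult_ac)
  then have "4 * E^2 * u * (a - u) \<le> (E * W)^2 * K"
    using \<open>d > 0\<close> by (simp add: mult_right_le_imp_le)
  then show ?thesis
    using \<open>K > 0\<close> unfolding u_def K_def by (simp add: pos_divide_le_eq)
qed

lemma closed_central_mag_geodesic_length_bound:
  assumes "A > 0" "E > \<bar>B\<bar>" and "mag_geodesic A B E s" and "W > 0"
    and "\<And>t. s (t + W) = hmul (hexp 0 0 z) (s t)"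
    and big: "2 * pi * A * E / (E - \<bar>B\<bar>) \<le> \<bar>z\<bar>"
  shows "4 * E^2 * (pi * A) * (\<bar>z\<bar> - pi * A) / (E^2 - B^2) \<le> (E * W)^2"
proof -
  have "E \<ge> 0"
    using \<open>E > \<bar>B\<bar>\<close> by linarith
  show ?thesis
  proof (rule closed_central_mag_geodesic_drift[OF \<open>A > 0\<close> \<open>E \<ge> 0\<close> assms(3-5)])
    fix c assume "\<bar>c\<bar> = E" "z = W * c"
    then have "E * W = \<bar>z\<bar>"
      using \<open>W > 0\<close> by (simp add: abs_mult)
    then show ?thesis
      using vertical_length_bound[OF \<open>A > 0\<close> \<open>E > \<bar>B\<bar>\<close> big] by simp
  next
    fix c m assume gyrating: "\<bar>c\<bar> < E" "c \<noteq> B" "(B - c) * W = 2 * pi * A * of_int m"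
      "z = - W * ((B - c)^2 + E^2 - B^2) / (2 * (B - c))"
    define d where "d = \<bar>B - c\<bar>"
    have "d > 0" "d < E + \<bar>B\<bar>"
      using gyrating by (auto simp: d_def)
    have Wd: "W * d = 2 * pi * A * \<bar>of_int m\<bar>"
      using arg_cong[OF gyrating(3), of abs] \<open>W > 0\<close> \<open>A > 0\<close> by (simp add: d_def abs_mult mult.commute)
    then have "\<bar>of_int m\<bar> \<ge> (1::real)"
      using \<open>W > 0\<close> \<open>d > 0\<close> \<open>A > 0\<close> by (cases "m = 0") auto
    moreover have "\<bar>z\<bar> = W * (d^2 + E^2 - B^2) / (2 * d)"
    proof -
      have "B^2 < E^2"
        using abs_less_iff_power2_less \<open>E \<ge> 0\<close> \<open>E > \<bar>B\<bar>\<close> by simp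
      then have "(B - c)^2 + E^2 - B^2 > 0"
        using zero_le_power2[of "B - c"] by linarith
      moreover have "\<bar>2 * B - 2 * c\<bar> = 2 * \<bar>B - c\<bar>"
        by (auto simp: abs_if)
      ultimately show ?thesis
        using gyrating(4) \<open>W > 0\<close> by (simp add: d_def abs_mult abs_divide)
    qed
    ultimately show ?thesis
      using gyrating_length_bound[OF \<open>A > 0\<close> \<open>E > \<bar>B\<bar>\<close> _ \<open>d > 0\<close> \<open>d < E + \<bar>B\<bar>\<close> Wd _ big] by simp
  qed
qed

lemma one_turn_gyration_rate:
  assumes "A > 0" "E > \<bar>B\<bar>" and big: "2 * pi * A * E / (E - \<bar>B\<bar>) < a"
  obtains d where "0 < d" "d < E - \<bar>B\<bar>" "a - pi * A = pi * A * (E^2 - B^2) / d^2"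
proof -
  define u K b where "u = pi * A" and "K = E^2 - B^2" and "b = \<bar>B\<bar>"
  have "u > 0" "E - b > 0" "E + b > 0"
    using assms by (auto simp: u_def b_def)
  have Kb: "K = (E - b) * (E + b)"
    by (simp add: K_def b_def power2_eq_square algebra_simps)
  then have "u * K > 0"
    using \<open>u > 0\<close> \<open>E - b > 0\<close> \<open>E + b > 0\<close> by simp
  have "2 * u * E < a * (E - b)"
    using big \<open>E - b > 0\<close> by (simp add: u_def b_def field_simps)
  then have "0 < (E - b) * (a * (E - b) - 2 * u * E)"
    using \<open>E - b > 0\<close> by simp
  then have gap: "u * K < (a - u) * (E - b)^2"
    unfolding Kb by (simp add: power2_eq_square algebra_simps)
  then have "a - u > 0"
    using \<open>u * K > 0\<close> zero_less_mult_iff[of "a - u" "(E - b)^2"] by simp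
  \<comment> \<open>d = |B - c| for the one-turn helix; the threshold on a is what makes |c| < E possible\<close>
  define d where "d = sqrt (u * K / (a - u))"
  have "d > 0"
    using \<open>u * K > 0\<close> \<open>a - u > 0\<close> by (simp add: d_def)
  have "d^2 = u * K / (a - u)"
    using \<open>u * K > 0\<close> \<open>a - u > 0\<close> by (simp add: d_def)
  then have d2: "d^2 * (a - u) = u * K"
    using \<open>a - u > 0\<close> by simp
  then have "d^2 * (a - u) < (E - b)^2 * (a - u)"
    by (metis gap mult.commute)
  then have "d^2 < (E - b)^2"
    by (rule mult_right_less_imp_less) (use \<open>a - u > 0\<close> in simp)
  then have "d < E - b"
    using \<open>E - b > 0\<close> power_less_imp_less_base[of d 2 "E - b"] by simp
  moreover have "a - u = u * K / d^2"
    using d2 \<open>d > 0\<close> by (simp add: eq_divide_eq mult.commute)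
  ultimately show thesis
    using that \<open>d > 0\<close> by (simp add: u_def K_def b_def)
qed

lemma shortest_central_mag_length_attained:
  assumes "A > 0" "E > \<bar>B\<bar>" and "2 * pi * A * E / (E - \<bar>B\<bar>) < \<bar>z\<bar>"
  shows "sqrt (4 * E^2 * (pi * A) * (\<bar>z\<bar> - pi * A) / (E^2 - B^2)) \<in> mag_lengths A B E {hexp 0 0 z}"
proof -
  obtain d where "0 < d" "d < E - \<bar>B\<bar>" and z_d: "\<bar>z\<bar> - pi * A = pi * A * (E^2 - B^2) / d^2"
    using one_turn_gyration_rate[OF assms] .
  have "0 \<le> E"
    using \<open>E > \<bar>B\<bar>\<close> by linarith
  then have "E^2 - B^2 > 0"
    using abs_less_iff_power2_less \<open>E > \<bar>B\<bar>\<close> by simp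
  then have "0 < pi * A * (E^2 - B^2) / d^2" "0 < pi * A"
    using \<open>A > 0\<close> \<open>d > 0\<close> by simp_all
  then have "z \<noteq> 0"
    using z_d by auto
  then have "sgn z = 1 \<or> sgn z = -1"
    by (simp add: sgn_if)
  from one_turn_helix_length[OF \<open>A > 0\<close> \<open>d > 0\<close> \<open>d < E - \<bar>B\<bar>\<close> this]
  have "2 * pi * A * E / d \<in> mag_lengths A B E {hexp 0 0 (sgn z * pi * A * (d^2 + E^2 - B^2) / d^2)}" .
  moreover have "pi * A * (d^2 + E^2 - B^2) / d^2 = \<bar>z\<bar>"
    using z_d \<open>d > 0\<close> by (simp add: field_simps)
  then have "sgn z * pi * A * (d^2 + E^2 - B^2) / d^2 = z"
    by (metis mult.assoc sgn_mult_abs times_divide_eq_right)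
  moreover have "sqrt (4 * E^2 * (pi * A) * (\<bar>z\<bar> - pi * A) / (E^2 - B^2)) = 2 * pi * A * E / d"
  proof (rule real_sqrt_unique)
    show "(2 * pi * A * E / d)^2 = 4 * E^2 * (pi * A) * (\<bar>z\<bar> - pi * A) / (E^2 - B^2)"
      unfolding z_d using \<open>d > 0\<close> \<open>E^2 - B^2 > 0\<close> by (simp add: field_simps power2_eq_square)
  qed (use \<open>A > 0\<close> \<open>d > 0\<close> \<open>E > \<bar>B\<bar>\<close> in simp)
  ultimately show ?thesis
    by simp
qed

lemma Inf_central_mag_lengths:
  assumes "A > 0" "E > \<bar>B\<bar>" and big: "2 * pi * A * E / (E - \<bar>B\<bar>) < \<bar>z\<bar>"
  shows "Inf (mag_lengths A B E {hexp 0 0 z})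
           = sqrt (4 * E^2 * (pi * A) * (\<bar>z\<bar> - pi * A) / (E^2 - B^2))"
proof (rule cInf_eq_minimum)
  show "sqrt (4 * E^2 * (pi * A) * (\<bar>z\<bar> - pi * A) / (E^2 - B^2)) \<in> mag_lengths A B E {hexp 0 0 z}"
    using shortest_central_mag_length_attained[OF assms] .
next
  fix l assume "l \<in> mag_lengths A B E {hexp 0 0 z}"
  then obtain W s where l: "l = E * W" and "W > 0" and "mag_geodesic A B E s"
    and "\<And>t. s (t + W) = hmul (hexp 0 0 z) (s t)"
    unfolding mag_lengths_def by auto
  then have "4 * E^2 * (pi * A) * (\<bar>z\<bar> - pi * A) / (E^2 - B^2) \<le> l^2"
    using closed_central_mag_geodesic_length_bound[OF \<open>A > 0\<close> \<open>E > \<bar>B\<bar>\<close>] big by simp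
  moreover have "l \<ge> 0"
    using l \<open>W > 0\<close> \<open>E > \<bar>B\<bar>\<close> by simp
  ultimately show "sqrt (4 * E^2 * (pi * A) * (\<bar>z\<bar> - pi * A) / (E^2 - B^2)) \<le> l"
    using real_sqrt_le_mono by fastforce
qed

lemma central_mag_lengths_eq_imp_abs_eq:
  assumes "A > 0" "E > \<bar>B\<bar>"
    and "2 * pi * A * E / (E - \<bar>B\<bar>) < \<bar>z1\<bar>" "2 * pi * A * E / (E - \<bar>B\<bar>) < \<bar>z2\<bar>"
    and "mag_lengths A B E {hexp 0 0 z1} = mag_lengths A B E {hexp 0 0 z2}"
  shows "\<bar>z1\<bar> = \<bar>z2\<bar>"
proof -
  have "sqrt (4 * E^2 * (pi * A) * (\<bar>z1\<bar> - pi * A) / (E^2 - B^2))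
      = sqrt (4 * E^2 * (pi * A) * (\<bar>z2\<bar> - pi * A) / (E^2 - B^2))"
    using Inf_central_mag_lengths[OF assms(1,2,3)] Inf_central_mag_lengths[OF assms(1,2,4)] assms(5)
    by metis
  moreover have "E > 0"
    using \<open>E > \<bar>B\<bar>\<close> by linarith
  moreover have "B^2 < E^2"
    using abs_less_iff_power2_less \<open>E > 0\<close> \<open>E > \<bar>B\<bar>\<close> by simp
  ultimately show ?thesis
    using \<open>A > 0\<close> by simp
qed

section \<open>Central lattices and their isomorphisms\<close>

lemma heis_lattice_centralizer_subset_hcenter:
  assumes "heis_lattice G" and "c \<in> G" and comm: "\<forall>h\<in>G. hmul c h = hmul h c"
  shows "c \<in> hcenter"
proof (rule ccontr)
  \<comment> \<open>G would project into the line through (c$1, c$2), contradicting cocompactness\<close>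
  assume "c \<notin> hcenter"
  define a b where "a = c$1" and "b = c$2"
  have "a^2 + b^2 > 0"
    using \<open>c \<notin> hcenter\<close> by (auto simp: hcenter_iff a_def b_def sum_power2_gt_zero_iff)
  have on_line: "a * h$2 - b * h$1 = 0" if "h \<in> G" for h
    using comm that by (auto simp: heis_eq_iff a_def b_def)
  obtain K where "compact K" and cover: "(\<Union>g\<in>G. hmul g ` K) = UNIV"
    using \<open>heis_lattice G\<close> unfolding heis_lattice_def by blast
  then obtain M where M: "\<And>k. k \<in> K \<Longrightarrow> norm k \<le> M"
    using compact_imp_bounded bounded_iff by metis
  define t where "t = ((\<bar>a\<bar> + \<bar>b\<bar>) * M + 1) / (a^2 + b^2)"
  have "hexp (- b * t) (a * t) 0 \<in> (\<Union>g\<in>G. hmul g ` K)"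
    using cover by simp
  then obtain g k where "g \<in> G" "k \<in> K" and gk: "hexp (- b * t) (a * t) 0 = hmul g k"
    by blast
  have "(\<bar>a\<bar> + \<bar>b\<bar>) * M + 1 = t * (a^2 + b^2)"
    using \<open>a^2 + b^2 > 0\<close> by (auto simp: t_def)
  also have "\<dots> = a * (a * t) - b * (- b * t)"
    by (simp add: power2_eq_square algebra_simps)
  also have "\<dots> = (a * g$2 - b * g$1) + (a * k$2 - b * k$1)"
    using gk by (simp add: heis_eq_iff algebra_simps)
  also have "\<dots> = a * k$2 - b * k$1"
    using on_line[OF \<open>g \<in> G\<close>] by simp
  also have "\<dots> \<le> \<bar>a\<bar> * \<bar>k$2\<bar> + \<bar>b\<bar> * \<bar>k$1\<bar>"
    by (simp add: abs_le_iff abs_mult[symmetric] abs_triangle_ineq4)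
  also have "\<dots> \<le> (\<bar>a\<bar> + \<bar>b\<bar>) * M"
    using M[OF \<open>k \<in> K\<close>] component_le_norm_cart[of k 1] component_le_norm_cart[of k 2]
    by (simp add: distrib_right add_mono mult_left_mono)
  finally show False
    by simp
qed

lemma heis_group_iso_zero:
  assumes "heis_group_iso G1 G2 f" and "heis_lattice G1"
  shows "f 0 = 0"
proof -
  have "0 \<in> G1"
    using \<open>heis_lattice G1\<close> unfolding heis_lattice_def by blast
  then have "f 0 = hmul (f 0) (f 0)"
    using assms(1) unfolding heis_group_iso_def by (metis hmul_zero)
  then show ?thesis
    by (simp add: heis_eq_iff)
qed

lemma heis_group_iso_hcenter:
  assumes iso: "heis_group_iso G1 G2 f" and "heis_lattice G1" "heis_lattice G2"
  shows "f ` (G1 \<inter> hcenter) = G2 \<inter> hcenter"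
proof -
  have bij: "bij_betw f G1 G2" and hom: "\<And>a b. a \<in> G1 \<Longrightarrow> b \<in> G1 \<Longrightarrow> f (hmul a b) = hmul (f a) (f b)"
    using iso unfolding heis_group_iso_def by auto
  have closed: "hmul a b \<in> G1" if "a \<in> G1" "b \<in> G1" for a b
    using \<open>heis_lattice G1\<close> that unfolding heis_lattice_def by blast
  have "f c \<in> hcenter" if "c \<in> G1" "c \<in> hcenter" for c
  proof (rule heis_lattice_centralizer_subset_hcenter[OF \<open>heis_lattice G2\<close>])
    show "f c \<in> G2"
      using bij \<open>c \<in> G1\<close> bij_betwE by blast
    show "\<forall>h\<in>G2. hmul (f c) h = hmul h (f c)"
    proof
      fix h assume "h \<in> G2"
      then obtain h\<^sub>1 where "h\<^sub>1 \<in> G1" "h = f h\<^sub>1"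
        using bij unfolding bij_betw_def by blast
      moreover have "hmul c h\<^sub>1 = hmul h\<^sub>1 c"
        using \<open>c \<in> hcenter\<close> unfolding hcenter_def by blast
      ultimately show "hmul (f c) h = hmul h (f c)"
        using hom \<open>c \<in> G1\<close> by metis
    qed
  qed
  moreover have "c \<in> f ` (G1 \<inter> hcenter)" if "c \<in> G2" "c \<in> hcenter" for c
  proof -
    obtain c\<^sub>1 where "c\<^sub>1 \<in> G1" "f c\<^sub>1 = c"
      using bij \<open>c \<in> G2\<close> unfolding bij_betw_def by blast
    have "hmul c\<^sub>1 h = hmul h c\<^sub>1" if "h \<in> G1" for h
    proof (rule inj_onD[OF bij_betw_imp_inj_on[OF bij]])
      show "f (hmul c\<^sub>1 h) = f (hmul h c\<^sub>1)"
        using hom \<open>c\<^sub>1 \<in> G1\<close> \<open>f c\<^sub>1 = c\<close> \<open>c \<in> hcenter\<close> that unfolding hcenter_def by auto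
    qed (use closed \<open>c\<^sub>1 \<in> G1\<close> that in auto)
    then have "c\<^sub>1 \<in> hcenter"
      using heis_lattice_centralizer_subset_hcenter \<open>heis_lattice G1\<close> \<open>c\<^sub>1 \<in> G1\<close> by blast
    with \<open>c\<^sub>1 \<in> G1\<close> \<open>f c\<^sub>1 = c\<close> show ?thesis
      by blast
  qed
  ultimately show ?thesis
    using bij by (auto simp: bij_betw_def)
qed

lemma hom_hexp_vertical_multiples:
  assumes hom: "\<forall>a\<in>G. \<forall>b\<in>G. f (hmul a b) = hmul (f a) (f b)" and "f 0 = 0"
    and G: "\<And>k::int. hexp 0 0 (of_int k * z) \<in> G" and generator: "f (hexp 0 0 z) = hexp 0 0 w"
  shows "f (hexp 0 0 (of_int k * z)) = hexp 0 0 (of_int k * w)"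
proof (induction k rule: int_induct[where k = 0])
  case base
  then show ?case
    using \<open>f 0 = 0\<close> by simp
next
  case (step1 k)
  have "hexp 0 0 (of_int (k + 1) * z) = hmul (hexp 0 0 (of_int k * z)) (hexp 0 0 z)"
    by (simp add: hmul_hexp_vertical algebra_simps)
  then have "f (hexp 0 0 (of_int (k + 1) * z)) = hmul (hexp 0 0 (of_int k * w)) (hexp 0 0 w)"
    using hom G[of k] G[of 1] step1.IH generator by simp
  then show ?case
    by (simp add: hmul_hexp_vertical algebra_simps)
next
  case (step2 k)
  have "hexp 0 0 (of_int k * z) = hmul (hexp 0 0 (of_int (k - 1) * z)) (hexp 0 0 z)"
    by (simp add: hmul_hexp_vertical algebra_simps)
  then have "hexp 0 0 (of_int k * w) = hmul (f (hexp 0 0 (of_int (k - 1) * z))) (hexp 0 0 w)"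
    using hom G[of "k - 1"] G[of 1] step2.IH generator by simp
  then show ?case
    by (simp add: hmul_hexp_vertical heis_eq_iff algebra_simps)
qed

lemma heis_group_iso_central_multiples:
  assumes iso: "heis_group_iso G1 G2 f" and L1: "heis_lattice G1" and L2: "heis_lattice G2"
    and C1: "G1 \<inter> hcenter = {hexp 0 0 (of_int k * z1) | k :: int. True}"
    and C2: "G2 \<inter> hcenter = {hexp 0 0 (of_int k * z2) | k :: int. True}"
  obtains m n :: int where "\<And>k::int. f (hexp 0 0 (of_int k * z1)) = hexp 0 0 (of_int (k * m) * z2)"
    and "f (hexp 0 0 (of_int n * z1)) = hexp 0 0 z2"
proof -
  have hom: "\<forall>a\<in>G1. \<forall>b\<in>G1. f (hmul a b) = hmul (f a) (f b)"
    using iso unfolding heis_group_iso_def by auto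
  have image: "f ` {hexp 0 0 (of_int k * z1) | k :: int. True} = {hexp 0 0 (of_int k * z2) | k :: int. True}"
    using heis_group_iso_hcenter[OF iso L1 L2] unfolding C1 C2 .
  have "f (hexp 0 0 (of_int 1 * z1)) \<in> {hexp 0 0 (of_int k * z2) | k :: int. True}"
    unfolding image[symmetric] by blast
  then obtain m :: int where "f (hexp 0 0 z1) = hexp 0 0 (of_int m * z2)"
    by auto
  moreover have "hexp 0 0 (of_int k * z1) \<in> G1" for k :: int
    using C1 by blast
  ultimately have "f (hexp 0 0 (of_int k * z1)) = hexp 0 0 (of_int (k * m) * z2)" for k :: int
    using hom_hexp_vertical_multiples[OF hom heis_group_iso_zero[OF iso L1]] by (simp add: mult.assoc)
  moreover have "hexp 0 0 (of_int 1 * z2) \<in> f ` {hexp 0 0 (of_int k * z1) | k :: int. True}"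
    unfolding image by blast
  then obtain n :: int where "f (hexp 0 0 (of_int n * z1)) = hexp 0 0 z2"
    by auto
  ultimately show thesis
    using that by blast
qed

lemma heis_group_iso_central_generators:
  assumes iso: "heis_group_iso G1 G2 f" and L1: "heis_lattice G1" and "heis_lattice G2"
    and C1: "G1 \<inter> hcenter = {hexp 0 0 (of_int k * z1) | k :: int. True}"
    and "G2 \<inter> hcenter = {hexp 0 0 (of_int k * z2) | k :: int. True}"
  obtains \<sigma> :: int where "\<bar>\<sigma>\<bar> = 1" "\<And>k::int. f (hexp 0 0 (of_int k * z1)) = hexp 0 0 (of_int (k * \<sigma>) * z2)"
    and "z1 = 0 \<longleftrightarrow> z2 = 0"
proof -
  obtain m n :: int where multiples: "\<And>k::int. f (hexp 0 0 (of_int k * z1)) = hexp 0 0 (of_int (k * m) * z2)"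
    and n: "f (hexp 0 0 (of_int n * z1)) = hexp 0 0 z2"
    using heis_group_iso_central_multiples[OF assms] by blast
  have f0: "f 0 = 0"
    using heis_group_iso_zero[OF iso L1] .
  show ?thesis
  proof (cases "z2 = 0")
    case True
    have "inj_on f G1" "0 \<in> G1" "hexp 0 0 z1 \<in> G1"
      using iso L1 C1 unfolding heis_group_iso_def bij_betw_def heis_lattice_def by (auto intro: exI[of _ 1])
    moreover have "f (hexp 0 0 z1) = f 0"
      using multiples[of 1] f0 True by simp
    ultimately have "z1 = 0"
      using inj_onD by fastforce
    then show ?thesis
      using that[of 1] f0 True by simp
  next
    case False
    then have "of_int (n * m) = (1::real)"
      using multiples[of n] n by simp
    then have "\<bar>m\<bar> = 1"
      using zmult_eq_1_iff by (metis abs_1 abs_minus of_int_eq_1_iff)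
    moreover have "z1 \<noteq> 0"
      using n f0 False by auto
    ultimately show ?thesis
      using that[of m] multiples False by simp
  qed
qed

lemma same_marked_mag_spectrum_central_lengths:
  assumes "heis_lattice G1" "heis_lattice G2" and "same_marked_mag_spectrum A B E G1 G2"
    and "G1 \<inter> hcenter = {hexp 0 0 (of_int k * z1) | k :: int. True}"
    and "G2 \<inter> hcenter = {hexp 0 0 (of_int k * z2) | k :: int. True}"
  obtains \<sigma> :: int where "\<bar>\<sigma>\<bar> = 1" and "z1 = 0 \<longleftrightarrow> z2 = 0"
    and "\<And>k. of_int k * z1 \<noteq> 0 \<Longrightarrow>
      mag_lengths A B E {hexp 0 0 (of_int (k * \<sigma>) * z2)} = mag_lengths A B E {hexp 0 0 (of_int k * z1)}"
proof -
  obtain f where iso: "heis_group_iso G1 G2 f" and spectrum: "\<forall>g\<in>G1. g \<noteq> 0 \<longrightarrow>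
      mag_lengths A B E (conj_class G2 (f g)) = mag_lengths A B E (conj_class G1 g)"
    using assms(3) unfolding same_marked_mag_spectrum_def by blast
  obtain \<sigma> :: int where "\<bar>\<sigma>\<bar> = 1" and f: "\<And>k::int. f (hexp 0 0 (of_int k * z1)) = hexp 0 0 (of_int (k * \<sigma>) * z2)"
    and "z1 = 0 \<longleftrightarrow> z2 = 0"
    using heis_group_iso_central_generators[OF iso assms(1,2,4,5)] by blast
  have "0 \<in> G1" "0 \<in> G2"
    using assms(1,2) unfolding heis_lattice_def by blast+
  have "mag_lengths A B E {hexp 0 0 (of_int (k * \<sigma>) * z2)} = mag_lengths A B E {hexp 0 0 (of_int k * z1)}"
    if "of_int k * z1 \<noteq> 0" for k
  proof -
    have "hexp 0 0 (of_int k * z1) \<in> G1"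
      using assms(4) by blast
    moreover have "conj_class G1 (hexp 0 0 (of_int k * z1)) = {hexp 0 0 (of_int k * z1)}"
      "conj_class G2 (hexp 0 0 (of_int (k * \<sigma>) * z2)) = {hexp 0 0 (of_int (k * \<sigma>) * z2)}"
      using \<open>0 \<in> G1\<close> \<open>0 \<in> G2\<close> by (simp_all add: conj_class_central hexp_vertical_in_hcenter)
    ultimately show ?thesis
      using spectrum that f by (metis hexp_eq_0_iff)
  qed
  with \<open>\<bar>\<sigma>\<bar> = 1\<close> \<open>z1 = 0 \<longleftrightarrow> z2 = 0\<close> show ?thesis
    using that by blast
qed

lemma central_mag_lengths_of_multiples_eq_imp_abs_eq:
  fixes \<sigma> :: int
  assumes "A > 0" "E > \<bar>B\<bar>" "z1 \<noteq> 0" "z2 \<noteq> 0" "\<bar>\<sigma>\<bar> = 1"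
    and same: "\<And>k. of_int k * z1 \<noteq> 0 \<Longrightarrow>
      mag_lengths A B E {hexp 0 0 (of_int (k * \<sigma>) * z2)} = mag_lengths A B E {hexp 0 0 (of_int k * z1)}"
  shows "\<bar>z1\<bar> = \<bar>z2\<bar>"
proof -
  have \<sigma>: "\<bar>real_of_int \<sigma>\<bar> = 1"
    using \<open>\<bar>\<sigma>\<bar> = 1\<close> by (metis of_int_1 of_int_abs)
  \<comment> \<open>the shortest length detects |z| only above the threshold, so pass to a large multiple\<close>
  obtain n :: nat where n: "2 * pi * A * E / (E - \<bar>B\<bar>) < n * min \<bar>z1\<bar> \<bar>z2\<bar>"
    using assms(3,4) ex_less_of_nat_mult[of "min \<bar>z1\<bar> \<bar>z2\<bar>"] by auto
  moreover have "0 < 2 * pi * A * E / (E - \<bar>B\<bar>)"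
    using assms(1,2) by simp
  ultimately have "n > 0"
    by (cases n) auto
  have "n * min \<bar>z1\<bar> \<bar>z2\<bar> \<le> n * \<bar>z1\<bar>" "n * min \<bar>z1\<bar> \<bar>z2\<bar> \<le> n * \<bar>z2\<bar>"
    by (simp_all add: mult_left_mono)
  then have "2 * pi * A * E / (E - \<bar>B\<bar>) < \<bar>of_int (int n * \<sigma>) * z2\<bar>"
    "2 * pi * A * E / (E - \<bar>B\<bar>) < \<bar>of_int (int n) * z1\<bar>"
    using n \<sigma> by (simp_all add: abs_mult)
  moreover have "of_int (int n) * z1 \<noteq> 0"
    using \<open>n > 0\<close> \<open>z1 \<noteq> 0\<close> by simp
  ultimately have "\<bar>of_int (int n * \<sigma>) * z2\<bar> = \<bar>of_int (int n) * z1\<bar>"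
    using central_mag_lengths_eq_imp_abs_eq[OF assms(1,2)] same by blast
  with \<open>n > 0\<close> \<sigma> show ?thesis
    by (simp add: abs_mult)
qed

theorem lemma4p20:
  fixes A B E z1 z2 :: real and G1 G2 :: "heis set"
  assumes "A > 0"
    and "heis_lattice G1" and "heis_lattice G2"
    and "E > \<bar>B\<bar>"
    and "same_marked_mag_spectrum A B E G1 G2"
    and "G1 \<inter> hcenter = {hexp 0 0 (of_int k * z1) | k :: int. True}"
    and "G2 \<inter> hcenter = {hexp 0 0 (of_int k * z2) | k :: int. True}"
  shows "\<bar>z1\<bar> = \<bar>z2\<bar>"
proof -
  obtain \<sigma> :: int where "\<bar>\<sigma>\<bar> = 1" and zero_iff: "z1 = 0 \<longleftrightarrow> z2 = 0"
    and "\<And>k. of_int k * z1 \<noteq> 0 \<Longrightarrow>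
      mag_lengths A B E {hexp 0 0 (of_int (k * \<sigma>) * z2)} = mag_lengths A B E {hexp 0 0 (of_int k * z1)}"
    using same_marked_mag_spectrum_central_lengths[OF assms(2,3,5-7)] by blast
  then show ?thesis
    using central_mag_lengths_of_multiples_eq_imp_abs_eq[OF assms(1,4)] by (cases "z1 = 0") simp_all
qed

end
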